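(* Let $H$ be a finitely generated free abelian group. Then \[\ker\big(\mathrm{id}+*:\mathcal{P}(H)\to\mathcal{P}(H)\big)=\mathrm{im}\big(\mathrm{id}-*:\mathcal{P}(H)\to\mathcal{P}(H)\big)\] and \[\ker\big(\mathrm{id}+*:\mathcal{P}_T(H)\to\mathcal{P}_T(H)\big)=\mathrm{im}\big(\mathrm{id}-*:\mathcal{P}_T(H)\to\mathcal{P}_T(H)\big).\]
   Context: $V_H=H\otimes_{\mathbb{Z}}\mathbb{R}$. An integral polytope is the convex hull of a nonempty finite subset of $H\subseteq V_H$. $\mathcal{P}(H)$ is the Grothendieck group of the monoid of integral polytopes under Minkowski sum, and $\mathcal{P}_T(H)$ is the cokernel of $H\to\mathcal{P}(H)$, $h\mapsto\{h\}$. The involution $*$ is induced by $P\mapsto *P=\{-p:p\in P\}$, i.e. $*(P-Q)=*P-*Q$, on both groups. *)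

theory Defs
  imports "HOL-Analysis.Analysis"
begin

text \<open>The free abelian group H of rank n is modelled as the integer lattice Z^n
  inside V_H = R^n, with n given by a finite index type.\<close>

definition lattice :: "(real ^ 'n) set" where
  "lattice = {x. \<forall>i. x $ i \<in> \<int>}"

definition integral_polytope :: "(real ^ 'n) set \<Rightarrow> bool" where
  "integral_polytope P \<longleftrightarrow>
     (\<exists>S. finite S \<and> S \<noteq> {} \<and> S \<subseteq> lattice \<and> P = convex hull S)"

definition minkowski :: "(real ^ 'n) set \<Rightarrow> (real ^ 'n) set \<Rightarrow> (real ^ 'n) set" where
  "minkowski A B = {a + b | a b. a \<in> A \<and> b \<in> B}"

definition reflect :: "(real ^ 'n) set \<Rightarrow> (real ^ 'n) set" where
  "reflect P = {- p | p. p \<in> P}"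

text \<open>Grothendieck group P(H): elements are formal differences [P] - [Q] of integral
  polytopes, represented by pairs (P,Q), modulo the Grothendieck relation.\<close>

type_synonym 'n gpair = "(real ^ 'n) set \<times> (real ^ 'n) set"

definition gpair :: "('n::finite) gpair \<Rightarrow> bool" where
  "gpair x \<longleftrightarrow> integral_polytope (fst x) \<and> integral_polytope (snd x)"

definition groth_eq :: "('n::finite) gpair \<Rightarrow> ('n::finite) gpair \<Rightarrow> bool" where
  "groth_eq x y \<longleftrightarrow> (\<exists>R. integral_polytope R \<and>
      minkowski (minkowski (fst x) (snd y)) R = minkowski (minkowski (fst y) (snd x)) R)"

definition gadd :: "('n::finite) gpair \<Rightarrow> ('n::finite) gpair \<Rightarrow> ('n::finite) gpair" where
  "gadd x y = (minkowski (fst x) (fst y), minkowski (snd x) (snd y))"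

definition gneg :: "('n::finite) gpair \<Rightarrow> ('n::finite) gpair" where
  "gneg x = (snd x, fst x)"

definition gzero :: "('n::finite) gpair" where
  "gzero = ({0}, {0})"

definition gof :: "(real ^ 'n) set \<Rightarrow> ('n::finite) gpair" where
  "gof P = (P, {0})"

definition gstar :: "('n::finite) gpair \<Rightarrow> ('n::finite) gpair" where
  "gstar x = (reflect (fst x), reflect (snd x))"

text \<open>P_T(H) = P(H) / image of H, h \<mapsto> [{h}]: two elements are equal in P_T(H)
  iff their difference is [{h}] for some h in H.\<close>
definition gT_eq :: "('n::finite) gpair \<Rightarrow> ('n::finite) gpair \<Rightarrow> bool" where
  "gT_eq x y \<longleftrightarrow> (\<exists>h\<in>lattice. groth_eq (gadd x (gneg y)) (gof {h}))"

end

theory Submission imports Defs begin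

text \<open>Support functions h_P(u) = max_{p \<in> P} u \<bullet> p turn Minkowski sums into sums, the
  involution into u \<mapsto> -u, and singletons {h} into linear functionals; since a compact convex
  set is determined by its support function, P(H) embeds into the functions on V_H via
  [P] - [Q] \<mapsto> h_P - h_Q. For x = [P] - [Q] with image f, x + *x = 0 says f(u) + f(-u) = 0.
  Conversely, if f(u) + f(-u) = 0 then x = y - *y for y = [P] - [conv(P \<union> Q)], because
  h_{conv(P \<union> Q)} = max h_P h_Q. In P_T(H) the relations only change by a linear functional
  u \<bullet> h, which disappears when one adds the relation at u and at -u.\<close>

subsection \<open>Support functions\<close>

definition support_fun :: "'a::real_inner set \<Rightarrow> 'a \<Rightarrow> real" where
  "support_fun X u = Sup ((\<lambda>x. u \<bullet> x) ` X)"

lemma support_fun_eqI: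
  "z \<in> X \<Longrightarrow> (\<And>x. x \<in> X \<Longrightarrow> u \<bullet> x \<le> u \<bullet> z) \<Longrightarrow> support_fun X u = u \<bullet> z"
  unfolding support_fun_def by (rule cSup_eq_maximum) auto

lemma support_fun_attained:
  fixes X :: "'a::real_inner set"
  assumes "compact X" "X \<noteq> {}"
  obtains z where "z \<in> X" "\<And>x. x \<in> X \<Longrightarrow> u \<bullet> x \<le> u \<bullet> z" "support_fun X u = u \<bullet> z"
proof -
  have "continuous_on X (\<lambda>x. u \<bullet> x)"
    by (intro continuous_intros)
  then obtain z where "z \<in> X" "\<forall>x\<in>X. u \<bullet> x \<le> u \<bullet> z"
    using continuous_attains_sup[OF assms] by blast
  then show thesis using that support_fun_eqI by blast
qed

lemma support_fun_upper:
  fixes X :: "'a::real_inner set"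
  assumes "compact X" "z \<in> X"
  shows "u \<bullet> z \<le> support_fun X u"
  using assms by (metis empty_iff support_fun_attained)

lemma support_fun_singleton [simp]: "support_fun {h} u = u \<bullet> h"
  by (rule support_fun_eqI) auto

lemma support_fun_set_plus:
  fixes A B :: "'a::real_inner set"
  assumes "compact A" "A \<noteq> {}" "compact B" "B \<noteq> {}"
  shows "support_fun (A + B) u = support_fun A u + support_fun B u"
proof -
  obtain a where a: "a \<in> A" "\<And>x. x \<in> A \<Longrightarrow> u \<bullet> x \<le> u \<bullet> a" "support_fun A u = u \<bullet> a"
    using support_fun_attained[OF assms(1,2)] by blast
  obtain b where b: "b \<in> B" "\<And>x. x \<in> B \<Longrightarrow> u \<bullet> x \<le> u \<bullet> b" "support_fun B u = u \<bullet> b"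
    using support_fun_attained[OF assms(3,4)] by blast
  have "support_fun (A + B) u = u \<bullet> (a + b)"
    using a b by (intro support_fun_eqI) (auto simp: set_plus_def inner_add_right intro!: add_mono)
  with a b show ?thesis by (simp add: inner_add_right)
qed

lemma support_fun_uminus:
  fixes A :: "'a::real_inner set"
  assumes "compact A" "A \<noteq> {}"
  shows "support_fun (uminus ` A) u = support_fun A (- u)"
proof -
  obtain a where a: "a \<in> A" "\<And>x. x \<in> A \<Longrightarrow> (- u) \<bullet> x \<le> (- u) \<bullet> a" "support_fun A (- u) = (- u) \<bullet> a"
    using support_fun_attained[OF assms] by blast
  have "support_fun (uminus ` A) u = u \<bullet> (- a)"
    using a by (intro support_fun_eqI) auto
  with a show ?thesis by simp
qed

lemma support_fun_Un:
  fixes S T :: "'a::real_inner set"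
  assumes "compact S" "S \<noteq> {}" "compact T" "T \<noteq> {}"
  shows "support_fun (S \<union> T) u = max (support_fun S u) (support_fun T u)"
proof -
  obtain s where s: "s \<in> S" "\<And>x. x \<in> S \<Longrightarrow> u \<bullet> x \<le> u \<bullet> s" "support_fun S u = u \<bullet> s"
    using support_fun_attained[OF assms(1,2)] by blast
  obtain t where t: "t \<in> T" "\<And>x. x \<in> T \<Longrightarrow> u \<bullet> x \<le> u \<bullet> t" "support_fun T u = u \<bullet> t"
    using support_fun_attained[OF assms(3,4)] by blast
  show ?thesis
  proof (cases "u \<bullet> s \<le> u \<bullet> t")
    case True
    then have "support_fun (S \<union> T) u = u \<bullet> t"
      using s t by (intro support_fun_eqI) force+
    with True s t show ?thesis by simp
  next
    case False
    then have "support_fun (S \<union> T) u = u \<bullet> s"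
      using s t by (intro support_fun_eqI) force+
    with False s t show ?thesis by simp
  qed
qed

lemma support_fun_convex_hull:
  fixes S :: "'a::real_inner set"
  assumes "compact S" "S \<noteq> {}"
  shows "support_fun (convex hull S) u = support_fun S u"
proof -
  obtain z where z: "z \<in> S" "\<And>x. x \<in> S \<Longrightarrow> u \<bullet> x \<le> u \<bullet> z" "support_fun S u = u \<bullet> z"
    using support_fun_attained[OF assms] by blast
  have "convex hull S \<subseteq> {x. u \<bullet> x \<le> u \<bullet> z}"
    using z(2) by (intro hull_minimal convex_halfspace_le) auto
  then have "support_fun (convex hull S) u = u \<bullet> z"
    using z(1) hull_subset by (intro support_fun_eqI) fastforce+
  with z(3) show ?thesis by simp
qed

lemma subset_if_support_fun_le:
  fixes X Y :: "'a::{real_inner,heine_borel} set"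
  assumes "compact X" "compact Y" "convex Y" "Y \<noteq> {}"
    and le: "\<And>u. support_fun X u \<le> support_fun Y u"
  shows "X \<subseteq> Y"
proof
  fix z assume z: "z \<in> X"
  show "z \<in> Y"
  proof (rule ccontr)
    assume "z \<notin> Y"
    then obtain a b where ab: "a \<bullet> z < b" "\<forall>y\<in>Y. a \<bullet> y > b"
      using separating_hyperplane_closed_point[of Y z] assms(2,3) compact_imp_closed by blast
    obtain y where y: "y \<in> Y" "support_fun Y (- a) = (- a) \<bullet> y"
      using support_fun_attained[OF assms(2,4)] by blast
    have "(- a) \<bullet> z \<le> support_fun X (- a)"
      using support_fun_upper[OF assms(1) z] .
    also have "\<dots> \<le> (- a) \<bullet> y"
      using le y(2) by metis
    finally show False using ab y(1) by auto
  qed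
qed

lemma eq_if_support_fun_eq:
  fixes X Y :: "'a::{real_inner,heine_borel} set"
  assumes "compact X" "convex X" "X \<noteq> {}" "compact Y" "convex Y" "Y \<noteq> {}"
    and "\<And>u. support_fun X u = support_fun Y u"
  shows "X = Y"
  using assms subset_if_support_fun_le[of X Y] subset_if_support_fun_le[of Y X]
  by (metis order_refl subset_antisym)

subsection \<open>Integral polytopes\<close>

lemma minkowski_eq_set_plus: "minkowski A B = A + B"
  by (auto simp: minkowski_def set_plus_def)

lemma reflect_eq_image_uminus: "reflect A = uminus ` A"
  by (auto simp: reflect_def)

lemma lattice_add: "a \<in> lattice \<Longrightarrow> b \<in> lattice \<Longrightarrow> a + b \<in> lattice"
  by (auto simp: lattice_def)

lemma lattice_uminus: "a \<in> lattice \<Longrightarrow> - a \<in> lattice"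
  by (auto simp: lattice_def)

lemma zero_in_lattice: "0 \<in> lattice"
  by (auto simp: lattice_def)

lemma integral_polytope_imp:
  assumes "integral_polytope P"
  shows "compact P" "convex P" "P \<noteq> {}"
  using assms finite_imp_compact_convex_hull unfolding integral_polytope_def by auto

lemma integral_polytope_singleton: "h \<in> lattice \<Longrightarrow> integral_polytope {h}"
  unfolding integral_polytope_def by (intro exI[of _ "{h}"]) auto

lemma integral_polytope_minkowski:
  assumes "integral_polytope A" "integral_polytope B"
  shows "integral_polytope (minkowski A B)"
proof -
  obtain S T where S: "finite S" "S \<noteq> {}" "S \<subseteq> lattice" "A = convex hull S"
    and T: "finite T" "T \<noteq> {}" "T \<subseteq> lattice" "B = convex hull T"
    using assms unfolding integral_polytope_def by blast
  have "minkowski A B = convex hull (S + T)"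
    by (simp add: minkowski_eq_set_plus convex_hull_set_plus S T)
  moreover have "S + T \<subseteq> lattice"
    using S T lattice_add by (auto simp: set_plus_def)
  moreover have "S + T \<noteq> {}"
    using S(2) T(2) by (auto simp: set_plus_def)
  ultimately show ?thesis
    using S T unfolding integral_polytope_def by (blast intro: finite_set_plus)
qed

lemma integral_polytope_reflect:
  assumes "integral_polytope A"
  shows "integral_polytope (reflect A)"
proof -
  obtain S where S: "finite S" "S \<noteq> {}" "S \<subseteq> lattice" "A = convex hull S"
    using assms unfolding integral_polytope_def by blast
  have "reflect A = convex hull (uminus ` S)"
    by (simp add: reflect_eq_image_uminus S convex_hull_linear_image linear_uminus)
  moreover have "uminus ` S \<subseteq> lattice"
    using S lattice_uminus by auto
  ultimately show ?thesis
    unfolding integral_polytope_def using S by blast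
qed

lemma support_fun_minkowski:
  "integral_polytope A \<Longrightarrow> integral_polytope B \<Longrightarrow>
    support_fun (minkowski A B) u = support_fun A u + support_fun B u"
  by (simp add: minkowski_eq_set_plus support_fun_set_plus integral_polytope_imp)

lemma support_fun_reflect:
  "integral_polytope A \<Longrightarrow> support_fun (reflect A) u = support_fun A (- u)"
  by (simp add: reflect_eq_image_uminus support_fun_uminus integral_polytope_imp)

lemma integral_polytope_hull_Un:
  assumes "integral_polytope P" "integral_polytope Q"
  obtains C where "integral_polytope C" "\<And>u. support_fun C u = max (support_fun P u) (support_fun Q u)"
proof -
  obtain S T where S: "finite S" "S \<noteq> {}" "S \<subseteq> lattice" "P = convex hull S"
    and T: "finite T" "T \<noteq> {}" "T \<subseteq> lattice" "Q = convex hull T"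
    using assms unfolding integral_polytope_def by blast
  have "integral_polytope (convex hull (S \<union> T))"
    unfolding integral_polytope_def using S T by blast
  moreover have "support_fun (convex hull (S \<union> T)) u = max (support_fun P u) (support_fun Q u)" for u
    using S T by (simp add: finite_imp_compact support_fun_convex_hull support_fun_Un)
  ultimately show thesis using that by blast
qed

subsection \<open>The support function of a formal difference\<close>

definition gpair_support :: "'n::finite gpair \<Rightarrow> real ^ 'n \<Rightarrow> real" where
  "gpair_support x u = support_fun (fst x) u - support_fun (snd x) u"

lemma gpair_gadd: "gpair x \<Longrightarrow> gpair y \<Longrightarrow> gpair (gadd x y)"
  by (simp add: gpair_def gadd_def integral_polytope_minkowski)

lemma gpair_gneg: "gpair x \<Longrightarrow> gpair (gneg x)"
  by (simp add: gpair_def gneg_def)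

lemma gpair_gstar: "gpair x \<Longrightarrow> gpair (gstar x)"
  by (simp add: gpair_def gstar_def integral_polytope_reflect)

lemma gpair_gof_singleton: "h \<in> lattice \<Longrightarrow> gpair (gof {h})"
  by (simp add: gpair_def gof_def integral_polytope_singleton zero_in_lattice)

lemma gpair_gzero: "gpair gzero"
  using gpair_gof_singleton[OF zero_in_lattice] by (simp add: gof_def gzero_def)

lemma gpair_support_gadd:
  "gpair x \<Longrightarrow> gpair y \<Longrightarrow> gpair_support (gadd x y) u = gpair_support x u + gpair_support y u"
  by (simp add: gpair_support_def gpair_def gadd_def support_fun_minkowski)

lemma gpair_support_gneg: "gpair_support (gneg x) u = - gpair_support x u"
  by (simp add: gpair_support_def gneg_def)

lemma gpair_support_gstar: "gpair x \<Longrightarrow> gpair_support (gstar x) u = gpair_support x (- u)"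
  by (simp add: gpair_support_def gpair_def gstar_def support_fun_reflect)

lemma gpair_support_gof_singleton: "gpair_support (gof {h}) u = u \<bullet> h"
  by (simp add: gpair_support_def gof_def)

lemma gpair_support_gzero: "gpair_support gzero u = 0"
  by (simp add: gpair_support_def gzero_def)

lemmas gpair_support_simps = gpair_gadd gpair_gneg gpair_gstar gpair_gzero
  gpair_support_gadd gpair_support_gneg gpair_support_gstar gpair_support_gzero

lemma groth_eq_iff_gpair_support:
  assumes "gpair x" "gpair y"
  shows "groth_eq x y \<longleftrightarrow> (\<forall>u. gpair_support x u = gpair_support y u)"
proof
  assume "groth_eq x y"
  then obtain R where R: "integral_polytope R"
    "minkowski (minkowski (fst x) (snd y)) R = minkowski (minkowski (fst y) (snd x)) R"
    unfolding groth_eq_def by blast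
  show "\<forall>u. gpair_support x u = gpair_support y u"
  proof
    fix u
    have "support_fun (minkowski (minkowski (fst x) (snd y)) R) u
        = support_fun (minkowski (minkowski (fst y) (snd x)) R) u"
      using R(2) by simp
    then show "gpair_support x u = gpair_support y u"
      using assms R(1) by (simp add: gpair_def gpair_support_def support_fun_minkowski integral_polytope_minkowski)
  qed
next
  assume eq: "\<forall>u. gpair_support x u = gpair_support y u"
  have ip: "integral_polytope (minkowski (fst x) (snd y))" "integral_polytope (minkowski (fst y) (snd x))"
    using assms by (simp_all add: gpair_def integral_polytope_minkowski)
  have "support_fun (minkowski (fst x) (snd y)) u = support_fun (minkowski (fst y) (snd x)) u" for u
    using assms eq[rule_format, of u] by (simp add: gpair_def gpair_support_def support_fun_minkowski)
  then have "minkowski (fst x) (snd y) = minkowski (fst y) (snd x)"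
    using integral_polytope_imp[OF ip(1)] integral_polytope_imp[OF ip(2)]
    by (intro eq_if_support_fun_eq)
  then show "groth_eq x y"
    unfolding groth_eq_def
    by (intro exI[of _ "{0}"]) (simp add: integral_polytope_singleton zero_in_lattice)
qed

lemma gT_eq_iff_gpair_support:
  assumes "gpair x" "gpair y"
  shows "gT_eq x y \<longleftrightarrow> (\<exists>h\<in>lattice. \<forall>u. gpair_support x u - gpair_support y u = u \<bullet> h)"
  using assms unfolding gT_eq_def
  by (simp add: groth_eq_iff_gpair_support gpair_support_simps gpair_gof_singleton
      gpair_support_gof_singleton)

subsection \<open>Kernel of id + * and image of id - *\<close>

lemma linear_part_of_even_sum_eq_zero:
  fixes f :: "'a::real_inner \<Rightarrow> real"
  assumes "\<And>u. f u + f (- u) = u \<bullet> h"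
  shows "h = 0"
proof -
  have "h \<bullet> h = - (h \<bullet> h)"
    using assms[of h] assms[of "- h"] by (simp add: add.commute)
  then show ?thesis by simp
qed

lemma max_shift: "(a::real) + a' = b + b' \<Longrightarrow> max a b + a' = max a' b' + b"
  by (simp add: max_def)

lemma exists_gpair_support_eq_minus_star:
  assumes "gpair x" and odd: "\<And>u. gpair_support x u + gpair_support x (- u) = 0"
  obtains y where "gpair y" "\<And>u. gpair_support x u = gpair_support y u - gpair_support y (- u)"
proof -
  obtain P Q where x: "x = (P, Q)" "integral_polytope P" "integral_polytope Q"
    using assms(1) by (cases x) (auto simp: gpair_def)
  obtain C where C: "integral_polytope C" "\<And>u. support_fun C u = max (support_fun P u) (support_fun Q u)"
    using integral_polytope_hull_Un[OF x(2,3)] by blast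
  have width: "support_fun P u + support_fun P (- u) = support_fun Q u + support_fun Q (- u)" for u
    using odd[of u] by (simp add: x gpair_support_def)
  have "gpair_support x u = gpair_support (P, C) u - gpair_support (P, C) (- u)" for u
    using max_shift[OF width[of u]] by (simp add: x gpair_support_def C(2))
  moreover have "gpair (P, C)"
    using x C by (simp add: gpair_def)
  ultimately show thesis using that by blast
qed

lemma groth_ker_plus_star_iff:
  "gpair x \<Longrightarrow> groth_eq (gadd x (gstar x)) gzero \<longleftrightarrow>
    (\<forall>u. gpair_support x u + gpair_support x (- u) = 0)"
  by (simp add: groth_eq_iff_gpair_support gpair_support_simps)

lemma gT_ker_plus_star_iff:
  assumes "gpair x"
  shows "gT_eq (gadd x (gstar x)) gzero \<longleftrightarrow> (\<forall>u. gpair_support x u + gpair_support x (- u) = 0)"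
proof -
  have "(\<forall>u. gpair_support x u + gpair_support x (- u) = u \<bullet> h) \<longleftrightarrow>
      (\<forall>u. gpair_support x u + gpair_support x (- u) = 0) \<and> h = 0" for h
    using linear_part_of_even_sum_eq_zero[of "gpair_support x" h] by auto
  moreover have "gT_eq (gadd x (gstar x)) gzero \<longleftrightarrow>
      (\<exists>h\<in>lattice. \<forall>u. gpair_support x u + gpair_support x (- u) = u \<bullet> h)"
    using assms by (simp add: gT_eq_iff_gpair_support gpair_support_simps)
  ultimately show ?thesis
    using zero_in_lattice by blast
qed

lemma groth_im_minus_star_iff:
  assumes "gpair x"
  shows "(\<exists>y. gpair y \<and> groth_eq x (gadd y (gneg (gstar y)))) \<longleftrightarrow>
    (\<forall>u. gpair_support x u + gpair_support x (- u) = 0)"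
proof
  assume "\<exists>y. gpair y \<and> groth_eq x (gadd y (gneg (gstar y)))"
  then obtain y where "gpair y" "\<And>u. gpair_support x u = gpair_support y u - gpair_support y (- u)"
    using assms by (auto simp: groth_eq_iff_gpair_support gpair_support_simps)
  then show "\<forall>u. gpair_support x u + gpair_support x (- u) = 0"
    by simp
next
  assume "\<forall>u. gpair_support x u + gpair_support x (- u) = 0"
  then obtain y where "gpair y" "\<And>u. gpair_support x u = gpair_support y u - gpair_support y (- u)"
    using exists_gpair_support_eq_minus_star[OF assms] by blast
  then show "\<exists>y. gpair y \<and> groth_eq x (gadd y (gneg (gstar y)))"
    using assms by (intro exI[of _ y]) (simp add: groth_eq_iff_gpair_support gpair_support_simps)
qed

lemma gT_im_minus_star_iff:
  assumes "gpair x"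
  shows "(\<exists>y. gpair y \<and> gT_eq x (gadd y (gneg (gstar y)))) \<longleftrightarrow>
    (\<forall>u. gpair_support x u + gpair_support x (- u) = 0)"
proof
  assume "\<exists>y. gpair y \<and> gT_eq x (gadd y (gneg (gstar y)))"
  then obtain y h where "gpair y"
    "\<And>u. gpair_support x u - (gpair_support y u - gpair_support y (- u)) = u \<bullet> h"
    using assms by (auto simp: gT_eq_iff_gpair_support gpair_support_simps)
  note rel = this(2)
  show "\<forall>u. gpair_support x u + gpair_support x (- u) = 0"
  proof
    fix u
    show "gpair_support x u + gpair_support x (- u) = 0"
      using rel[of u] rel[of "- u"] by simp
  qed
next
  assume "\<forall>u. gpair_support x u + gpair_support x (- u) = 0"
  then obtain y where "gpair y" "\<And>u. gpair_support x u = gpair_support y u - gpair_support y (- u)"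
    using exists_gpair_support_eq_minus_star[OF assms] by blast
  then show "\<exists>y. gpair y \<and> gT_eq x (gadd y (gneg (gstar y)))"
    using assms zero_in_lattice
    by (intro exI[of _ y]) (force simp: gT_eq_iff_gpair_support gpair_support_simps)
qed

theorem theorem6p3:
  fixes x :: "'n::finite gpair"
  assumes "gpair x"
  shows "(groth_eq (gadd x (gstar x)) gzero \<longleftrightarrow>
           (\<exists>y. gpair y \<and> groth_eq x (gadd y (gneg (gstar y)))))
       \<and> (gT_eq (gadd x (gstar x)) gzero \<longleftrightarrow>
           (\<exists>y. gpair y \<and> gT_eq x (gadd y (gneg (gstar y)))))"
  using groth_ker_plus_star_iff[OF assms] gT_ker_plus_star_iff[OF assms]
    groth_im_minus_star_iff[OF assms] gT_im_minus_star_iff[OF assms]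
  by simp

end
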